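(* Let $n\ge 2$ be even. In the cover $C_n\to F_n$, the only points of $F_n$ that can be branched are the points $(X:Y:Z)$ of $F_n$ with $Z=0$ (the $n$ cusps lying above $\infty$), and their ramification indices are at most $2$.
   Context: Let $a=\begin{pmatrix}1&2\\0&1\end{pmatrix}$, $b=\begin{pmatrix}1&0\\2&1\end{pmatrix}$, $\Delta=\langle a,b\rangle\subset\mathrm{SL}(2,\mathbb{Z})$, free of rank 2, with $\Delta\backslash\mathbb{H}\cong\mathbb{P}^1-\{0,1,\infty\}$. $H_n$ is the Heisenberg group of upper unitriangular $3\times3$ matrices over $\mathbb{Z}/n\mathbb{Z}$, generated by $a_H=I+E_{12}$, $b_H=I+E_{23}$, with center $Z_n\cong\mathbb{Z}/n\mathbb{Z}$. $\phi:\Delta\to H_n$ is $a\mapsto a_H,b\mapsto b_H$ and $\psi:\Delta\to(\mathbb{Z}/n\mathbb{Z})^2$ is $a\mapsto(1,0),b\mapsto(0,1)$. $C_n$ (Heisenberg curve) and $F_n$ (Fermat curve) are the compactifications by cusps of $\ker\phi\backslash\mathbb{H}$ and $\ker\psi\backslash\mathbb{H}$; $C_n\to F_n$ is Galois with group $Z_n$. $F_n$ is identified with the projective curve $X^n+Y^n=Z^n$, on which the deck group $(\mathbb{Z}/n\mathbb{Z})^2$ of $F_n\to\mathbb{P}^1$ acts by $\sigma_{i,j}:(X:Y:Z)\mapsto(\zeta^iX:\zeta^jY:Z)$, $\zeta=e^{2\pi i/n}$, the quotient map being $(X:Y:Z)\mapsto (X/Z)^n$; the cusps of $F_n$ are the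 $3n$ points with $XYZ=0$, lying above $0$ ($X=0$), $1$ ($Y=0$) and $\infty$ ($Z=0$). *)

theory Defs
  imports Complex_Main
begin

datatype m2 = M int int int int

fun mmult :: "m2 \<Rightarrow> m2 \<Rightarrow> m2" where
  "mmult (M a b c d) (M a' b' c' d') =
     M (a*a' + b*c') (a*b' + b*d') (c*a' + d*c') (c*b' + d*d')"

definition mI :: m2 where "mI = M 1 0 0 1"

text \<open>Points of H* = H \<union> P^1(Q): interior points, rational cusps, and the cusp at infinity.\<close>
datatype hpt = Pt complex | Cusp rat | InfC

definition Hstar :: "hpt set" where
  "Hstar = {Pt z | z. Im z > 0} \<union> range Cusp \<union> {InfC}"

fun act :: "m2 \<Rightarrow> hpt \<Rightarrow> hpt" where
  "act (M a b c d) (Pt z) =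
     Pt ((of_int a * z + of_int b) / (of_int c * z + of_int d))"
| "act (M a b c d) (Cusp q) =
     (if of_int c * q + of_int d = 0 then InfC
      else Cusp ((of_int a * q + of_int b) / (of_int c * q + of_int d)))"
| "act (M a b c d) InfC = (if c = 0 then InfC else Cusp (of_int a / of_int c))"

text \<open>A letter is (is the generator a?, positive exponent?).\<close>
type_synonym letter = "bool \<times> bool"

fun gen :: "letter \<Rightarrow> m2" where
  "gen (True, True) = M 1 2 0 1"
| "gen (True, False) = M 1 (-2) 0 1"
| "gen (False, True) = M 1 0 2 1"
| "gen (False, False) = M 1 0 (-2) 1"

fun eval_mat :: "letter list \<Rightarrow> m2" where
  "eval_mat [] = mI"
| "eval_mat (l # w) = mmult (gen l) (eval_mat w)"

text \<open>Integer Heisenberg group: (x,y,z) stands for I + x E12 + y E23 + z E13.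
  Reduction mod n gives H_n.\<close>
fun hmult :: "int \<times> int \<times> int \<Rightarrow> int \<times> int \<times> int \<Rightarrow> int \<times> int \<times> int" where
  "hmult (x, y, z) (x', y', z') = (x + x', y + y', z + z' + x * y')"

fun genH :: "letter \<Rightarrow> int \<times> int \<times> int" where
  "genH (True, True) = (1, 0, 0)"
| "genH (True, False) = (-1, 0, 0)"
| "genH (False, True) = (0, 1, 0)"
| "genH (False, False) = (0, -1, 0)"

fun eval_H :: "letter list \<Rightarrow> int \<times> int \<times> int" where
  "eval_H [] = (0, 0, 0)"
| "eval_H (l # w) = hmult (genH l) (eval_H w)"

definition Delta :: "m2 set" where
  "Delta = range eval_mat"

definition ker_phi :: "nat \<Rightarrow> m2 set" where
  "ker_phi n = {eval_mat w | w. (case eval_H w of (x, y, z) \<Rightarrow>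
       x mod int n = 0 \<and> y mod int n = 0 \<and> z mod int n = 0)}"

text \<open>ker psi: words whose image in (Z/nZ)^2 (exponent sums of a and b) is 0.\<close>
definition ker_psi :: "nat \<Rightarrow> m2 set" where
  "ker_psi n = {eval_mat w | w. (case eval_H w of (x, y, z) \<Rightarrow>
       x mod int n = 0 \<and> y mod int n = 0)}"

definition stab :: "m2 set \<Rightarrow> hpt \<Rightarrow> m2 set" where
  "stab G x = {g \<in> G. act g x = x}"

text \<open>Left cosets of Stab_{G1}(x) in Stab_{G2}(x). Their number is the ramification index
  at the point G1 x of the map G1\<bsl>H* \<rightarrow> G2\<bsl>H* (no group here contains -I).\<close>
definition ram_cosets :: "m2 set \<Rightarrow> m2 set \<Rightarrow> hpt \<Rightarrow> m2 set set" where
  "ram_cosets G1 G2 x = {(\<lambda>h. mmult g h) ` stab G1 x | g. g \<in> stab G2 x}"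

definition ram_index :: "m2 set \<Rightarrow> m2 set \<Rightarrow> hpt \<Rightarrow> nat" where
  "ram_index G1 G2 x = card (ram_cosets G1 G2 x)"

text \<open>The points of F_n = ker psi\<bsl>H* with Z = 0 (the n cusps over infinity) are the
  ker psi-orbits of cusps in the Delta-orbit of the cusp 1.\<close>
definition Fermat_Z0_cusps :: "hpt set" where
  "Fermat_Z0_cusps = {act g (Cusp 1) | g. g \<in> Delta}"

end

theory Submission
  imports Defs
begin

text \<open>\<open>\<Delta>\<close> is free on \<open>a, b\<close> (ping-pong on \<open>\<int>\<^sup>2\<close>), so \<open>\<phi>\<close> lifts to a homomorphism
  \<open>\<Delta> \<rightarrow> H(\<int>)\<close>, and \<open>ker \<phi>\<close>, \<open>ker \<psi>\<close> are the preimages of ``\<open>n\<close> divides all three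
  coordinates'', resp. ``the first two''. No element \<open>\<noteq> 1\<close> of \<open>\<Delta>\<close> fixes a point of \<open>\<bbbH>\<close>, so
  interior points are unramified. Every cusp is \<open>h x\<^sub>0\<close> with \<open>h \<in> \<Delta>\<close> and \<open>x\<^sub>0 \<in> {\<infinity>, 0, 1}\<close>,
  whose stabilisers are generated by \<open>a\<close>, \<open>b\<close> and \<open>c = b a\<^sup>-\<^sup>1\<close>, with images \<open>(1,0,0)\<close>,
  \<open>(0,1,0)\<close>, \<open>(-1,1,0)\<close>. Conjugation by \<open>h\<close> adds to the central coordinate an integer
  combination of the other two, so at cusps in the orbits of \<open>\<infinity>\<close> and \<open>0\<close> the stabiliser in
  \<open>ker \<psi>\<close> already lies in \<open>ker \<phi>\<close>. At cusps in the orbit of \<open>1\<close> (those of \<open>F\<^sub>n\<close> with \<open>Z = 0\<close>),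
  \<open>c\<^sup>m\<close> has central coordinate \<open>-m(m-1)/2\<close> plus a multiple of \<open>m\<close>; for \<open>n | m\<close> this is
  divisible by \<open>n\<close> once \<open>m/n\<close> is even, so the parity of \<open>m/n\<close> separates the at most two cosets.\<close>

fun det :: "m2 \<Rightarrow> int" where
  "det (M a b c d) = a * d - b * c"

fun minv :: "m2 \<Rightarrow> m2" where
  "minv (M a b c d) = M d (- b) (- c) a"

lemma mmult_assoc: "mmult (mmult A B) C = mmult A (mmult B C)"
  by (cases A; cases B; cases C) (simp add: algebra_simps)

lemma mmult_mI_left [simp]: "mmult mI A = A"
  by (cases A) (simp add: mI_def)

lemma mmult_mI_right [simp]: "mmult A mI = A"
  by (cases A) (simp add: mI_def)

lemma minv_mI [simp]: "minv mI = mI"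
  by (simp add: mI_def)

lemma minv_mmult: "minv (mmult A B) = mmult (minv B) (minv A)"
  by (cases A; cases B) (simp add: algebra_simps)

lemma mmult_minv: "det A = 1 \<Longrightarrow> mmult A (minv A) = mI"
  by (cases A) (simp add: mI_def algebra_simps)

lemma minv_mmult_cancel: "det A = 1 \<Longrightarrow> mmult (minv A) A = mI"
  by (cases A) (simp add: mI_def algebra_simps)

fun hinv :: "int \<times> int \<times> int \<Rightarrow> int \<times> int \<times> int" where
  "hinv (x, y, z) = (- x, - y, x * y - z)"

lemma hmult_assoc: "hmult (hmult u v) w = hmult u (hmult v w)"
  by (cases u; cases v; cases w) (simp add: algebra_simps)

lemma hmult_0_left [simp]: "hmult (0, 0, 0) u = u"
  by (cases u) simp

lemma hmult_0_right [simp]: "hmult u (0, 0, 0) = u"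
  by (cases u) simp

lemma hinv_hmult: "hinv (hmult u v) = hmult (hinv v) (hinv u)"
  by (cases u; cases v) (simp add: algebra_simps)

lemma hmult_hinv_left_eq_0_iff: "hmult (hinv u) v = (0, 0, 0) \<longleftrightarrow> v = u"
  by (cases u; cases v) auto

fun linv :: "letter \<Rightarrow> letter" where
  "linv (g, e) = (g, \<not> e)"

lemma gen_linv: "gen (linv l) = minv (gen l)"
  by (cases l rule: gen.cases) simp_all

lemma genH_linv: "genH (linv l) = hinv (genH l)"
  by (cases l rule: genH.cases) simp_all

lemma det_gen: "det (gen l) = 1"
  by (cases l rule: gen.cases) simp_all

definition winv :: "letter list \<Rightarrow> letter list" where
  "winv w = rev (map linv w)"

lemma eval_mat_append: "eval_mat (u @ v) = mmult (eval_mat u) (eval_mat v)"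
  by (induction u) (simp_all add: mmult_assoc)

lemma eval_H_append: "eval_H (u @ v) = hmult (eval_H u) (eval_H v)"
  by (induction u) (simp_all add: hmult_assoc)

lemma eval_mat_winv: "eval_mat (winv w) = minv (eval_mat w)"
  by (induction w) (simp_all add: winv_def eval_mat_append gen_linv minv_mmult)

lemma eval_H_winv: "eval_H (winv w) = hinv (eval_H w)"
  by (induction w) (simp_all add: winv_def eval_H_append genH_linv hinv_hmult)

fun reduced :: "letter list \<Rightarrow> bool" where
  "reduced (l # l' # w) \<longleftrightarrow> l' \<noteq> linv l \<and> reduced (l' # w)"
| "reduced _ \<longleftrightarrow> True"

fun red :: "letter list \<Rightarrow> letter list" where
  "red [] = []"
| "red (l # w) = (case red w of
      [] \<Rightarrow> [l]
    | l' # w' \<Rightarrow> if l' = linv l then w' else l # l' # w')"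

lemma reduced_Cons_tl: "reduced (l # w) \<Longrightarrow> reduced w"
  by (cases w) auto

lemma reduced_red: "reduced (red w)"
  by (induction w) (auto split: list.splits dest: reduced_Cons_tl)

lemma gen_cancel: "mmult (gen l) (mmult (gen (linv l)) A) = A"
  by (simp add: gen_linv mmult_assoc[symmetric] mmult_minv det_gen)

lemma genH_cancel: "hmult (genH l) (hmult (genH (linv l)) u) = u"
  by (cases l rule: genH.cases) (cases u; simp)+

lemma eval_mat_eval_H_red: "eval_mat (red w) = eval_mat w \<and> eval_H (red w) = eval_H w"
proof (induction w)
  case (Cons l w)
  show ?case
  proof (cases "red w")
    case (Cons l' w')
    with Cons.IH have "eval_mat w = mmult (gen l') (eval_mat w')"
      "eval_H w = hmult (genH l') (eval_H w')" by auto
    with Cons show ?thesis by (auto simp: gen_cancel genH_cancel)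
  qed (use Cons.IH in auto)
qed simp

section \<open>Freeness of \<open>\<Delta>\<close>\<close>

fun mv :: "m2 \<Rightarrow> int \<times> int \<Rightarrow> int \<times> int" where
  "mv (M a b c d) (p, r) = (a * p + b * r, c * p + d * r)"

lemma mv_mmult: "mv (mmult A B) v = mv A (mv B v)"
  by (cases A; cases B; cases v) (simp add: algebra_simps)

lemma mv_mI [simp]: "mv mI v = v"
  by (cases v) (simp add: mI_def)

fun pingpong_cone :: "letter \<Rightarrow> (int \<times> int) set" where
  "pingpong_cone (True, True) = {(p, r). \<bar>p\<bar> > \<bar>r\<bar> \<and> (p \<ge> 0 \<and> r \<ge> 0 \<or> p \<le> 0 \<and> r \<le> 0)}"
| "pingpong_cone (True, False) = {(p, r). \<bar>p\<bar> > \<bar>r\<bar> \<and> (p \<ge> 0 \<and> r \<le> 0 \<or> p \<le> 0 \<and> r \<ge> 0)}"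
| "pingpong_cone (False, True) = {(p, r). \<bar>r\<bar> > \<bar>p\<bar> \<and> (p \<ge> 0 \<and> r \<ge> 0 \<or> p \<le> 0 \<and> r \<le> 0)}"
| "pingpong_cone (False, False) = {(p, r). \<bar>r\<bar> > \<bar>p\<bar> \<and> (p \<ge> 0 \<and> r \<le> 0 \<or> p \<le> 0 \<and> r \<ge> 0)}"

fun pingpong_domain :: "letter \<Rightarrow> (int \<times> int) set" where
  "pingpong_domain (True, _) = {(p, r). \<bar>p\<bar> < \<bar>r\<bar>}"
| "pingpong_domain (False, _) = {(p, r). \<bar>r\<bar> < \<bar>p\<bar>}"

lemma mv_gen_pingpong:
  assumes "v \<in> pingpong_domain l \<union> pingpong_cone l"
  shows "mv (gen l) v \<in> pingpong_cone l"
proof -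
  obtain p r where v: "v = (p, r)"
    by fastforce
  show ?thesis
    using assms unfolding v
    by (cases l rule: gen.cases) ((simp add: abs_if split: if_splits), arith+)+
qed

lemma pingpong_cone_subset_domain: "fst l \<noteq> fst l' \<Longrightarrow> pingpong_cone l' \<subseteq> pingpong_domain l"
  by (cases l rule: gen.cases; cases l' rule: gen.cases) auto

lemma mv_eval_mat_reduced:
  "reduced w \<Longrightarrow> w \<noteq> [] \<Longrightarrow> v \<in> pingpong_domain (last w) \<Longrightarrow>
     mv (eval_mat w) v \<in> pingpong_cone (hd w)"
proof (induction w rule: reduced.induct)
  case (1 l l' w)
  then have IH: "mv (eval_mat (l' # w)) v \<in> pingpong_cone l'" and "l' \<noteq> linv l"
    by auto
  then consider "l' = l" | "fst l \<noteq> fst l'"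
    by (cases l; cases l') auto
  then have "mv (eval_mat (l' # w)) v \<in> pingpong_domain l \<union> pingpong_cone l"
    by cases (use IH pingpong_cone_subset_domain[of l l'] in auto)
  then show ?case
    using mv_gen_pingpong by (simp add: mv_mmult)
qed (auto intro: mv_gen_pingpong)

lemma pingpong_domain_not_subset_cone: "\<not> pingpong_domain l \<subseteq> pingpong_cone l'"
proof -
  have "(1, 2) \<notin> pingpong_cone l' \<or> (-1, 2) \<notin> pingpong_cone l'"
       "(2, 1) \<notin> pingpong_cone l' \<or> (2, -1) \<notin> pingpong_cone l'"
    by (cases l' rule: gen.cases; simp)+
  moreover have "(1, 2) \<in> pingpong_domain (True, e)" "(-1, 2) \<in> pingpong_domain (True, e)"
    "(2, 1) \<in> pingpong_domain (False, e)" "(2, -1) \<in> pingpong_domain (False, e)" for e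
    by simp_all
  ultimately show ?thesis
    by (cases l rule: gen.cases) blast+
qed

lemma eval_mat_reduced_neq_mI: "reduced w \<Longrightarrow> w \<noteq> [] \<Longrightarrow> eval_mat w \<noteq> mI"
  using mv_eval_mat_reduced pingpong_domain_not_subset_cone by fastforce

lemma det_mmult: "det (mmult A B) = det A * det B"
  by (cases A; cases B) (simp add: algebra_simps)

lemma det_eval_mat: "det (eval_mat w) = 1"
  by (induction w) (simp_all add: mI_def det_mmult det_gen)

lemma eval_H_eq_if_eval_mat_eq:
  assumes "eval_mat w = eval_mat w'"
  shows "eval_H w = eval_H w'"
proof -
  have "eval_mat (winv w' @ w) = mI"
    using assms by (simp add: eval_mat_append eval_mat_winv minv_mmult_cancel det_eval_mat)
  then have "red (winv w' @ w) = []"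
    using eval_mat_reduced_neq_mI reduced_red eval_mat_eval_H_red by metis
  then have "eval_H (winv w' @ w) = (0, 0, 0)"
    using eval_mat_eval_H_red by (metis eval_H.simps(1))
  then show ?thesis
    by (simp add: eval_H_append eval_H_winv hmult_hinv_left_eq_0_iff)
qed

section \<open>The lift of \<open>\<phi>\<close> to \<open>\<Delta> \<rightarrow> H(\<int>)\<close>\<close>

fun Delta_cong :: "m2 \<Rightarrow> bool" where
  "Delta_cong (M a b c d) \<longleftrightarrow>
     a mod 4 = 1 \<and> d mod 4 = 1 \<and> even b \<and> even c \<and> a * d - b * c = 1"

lemma Delta_cong_eval_mat: "Delta_cong (eval_mat w)"
proof (induction w)
  case (Cons l w)
  obtain a b c d where w: "eval_mat w = M a b c d"
    by (cases "eval_mat w")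
  with Cons have "a mod 4 = 1" "d mod 4 = 1" "even b" "even c" "a * d - b * c = 1"
    by auto
  with w show ?case
    by (cases l rule: gen.cases) (simp_all add: algebra_simps, presburger+)
qed (simp add: mI_def)

lemma Delta_cong_if_in_Delta: "g \<in> Delta \<Longrightarrow> Delta_cong g"
  by (auto simp: Delta_def Delta_cong_eval_mat)

lemma det_Delta: "g \<in> Delta \<Longrightarrow> det g = 1"
  by (auto simp: Delta_def det_eval_mat)

lemma mI_in_Delta: "mI \<in> Delta"
  unfolding Delta_def by (metis eval_mat.simps(1) rangeI)

lemma mmult_in_Delta: "g \<in> Delta \<Longrightarrow> h \<in> Delta \<Longrightarrow> mmult g h \<in> Delta"
  unfolding Delta_def by (auto simp flip: eval_mat_append)

lemma minv_in_Delta: "g \<in> Delta \<Longrightarrow> minv g \<in> Delta"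
  unfolding Delta_def by (auto simp flip: eval_mat_winv)

text \<open>The homomorphism \<open>\<Delta> \<rightarrow> H(\<int>)\<close> lifting \<open>\<phi>\<close>; it is well defined because \<open>\<Delta>\<close> is free on
  \<open>a, b\<close>. Outside \<open>\<Delta>\<close> its value is irrelevant.\<close>

definition heis :: "m2 \<Rightarrow> int \<times> int \<times> int" where
  "heis g = eval_H (SOME w. eval_mat w = g)"

lemma heis_eval_mat [simp]: "heis (eval_mat w) = eval_H w"
proof -
  have "eval_mat (SOME w'. eval_mat w' = eval_mat w) = eval_mat w"
    by (rule someI) (rule refl)
  then show ?thesis
    unfolding heis_def by (rule eval_H_eq_if_eval_mat_eq)
qed

lemma heis_mmult: "g \<in> Delta \<Longrightarrow> h \<in> Delta \<Longrightarrow> heis (mmult g h) = hmult (heis g) (heis h)"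
  unfolding Delta_def by (auto simp flip: eval_mat_append simp: eval_H_append)

lemma heis_minv: "g \<in> Delta \<Longrightarrow> heis (minv g) = hinv (heis g)"
  unfolding Delta_def by (auto simp flip: eval_mat_winv simp: eval_H_winv)

definition Delta_subgroup :: "m2 set \<Rightarrow> bool" where
  "Delta_subgroup G \<longleftrightarrow>
     G \<subseteq> Delta \<and> (\<forall>g \<in> G. \<forall>h \<in> G. mmult g h \<in> G) \<and> (\<forall>g \<in> G. minv g \<in> G)"

lemma Delta_subgroup_heis_preimage:
  assumes "\<And>u v. P u \<Longrightarrow> P v \<Longrightarrow> P (hmult u v)" and "\<And>u. P u \<Longrightarrow> P (hinv u)"
  shows "Delta_subgroup {g \<in> Delta. P (heis g)}"
  unfolding Delta_subgroup_def
  using assms by (simp add: mmult_in_Delta minv_in_Delta heis_mmult heis_minv)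

lemma ker_phi_eq:
  "ker_phi n = {g \<in> Delta. case heis g of (x, y, z) \<Rightarrow> int n dvd x \<and> int n dvd y \<and> int n dvd z}"
  by (auto simp: ker_phi_def Delta_def dvd_eq_mod_eq_0)

lemma ker_psi_eq:
  "ker_psi n = {g \<in> Delta. case heis g of (x, y, z) \<Rightarrow> int n dvd x \<and> int n dvd y}"
  by (auto simp: ker_psi_def Delta_def dvd_eq_mod_eq_0)

lemma Delta_subgroup_ker_phi: "Delta_subgroup (ker_phi n)"
  unfolding ker_phi_eq by (rule Delta_subgroup_heis_preimage) auto

lemma Delta_subgroup_ker_psi: "Delta_subgroup (ker_psi n)"
  unfolding ker_psi_eq by (rule Delta_subgroup_heis_preimage) auto

lemma mI_in_ker_phi: "mI \<in> ker_phi n"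
  using heis_eval_mat[of "[]"] by (simp add: ker_phi_eq mI_in_Delta)

definition cusps :: "hpt set" where
  "cusps = range Cusp \<union> {InfC}"

fun cusp_of :: "int \<times> int \<Rightarrow> hpt" where
  "cusp_of (p, r) = (if r = 0 then InfC else Cusp (of_int p / of_int r))"

lemma cusp_of_in_cusps: "cusp_of v \<in> cusps"
  by (cases v) (auto simp: cusps_def)

lemma cusps_eq_cusp_of: "x \<in> cusps \<Longrightarrow> \<exists>v. v \<noteq> (0, 0) \<and> x = cusp_of v"
proof (cases x)
  case (Cusp q)
  obtain p r where qr: "quotient_of q = (p, r)"
    by fastforce
  then have "r > 0" "q = of_int p / of_int r"
    by (simp_all add: quotient_of_denom_pos quotient_of_div)
  with Cusp show ?thesis
    by (intro exI[of _ "(p, r)"]) auto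
next
  case InfC
  then show ?thesis
    by (intro exI[of _ "(1, 0)"]) simp
qed (auto simp: cusps_def)

lemma act_cusp_of:
  assumes "v \<noteq> (0, 0)"
  shows "act g (cusp_of v) = cusp_of (mv g v)"
proof -
  obtain a b c d where g: "g = M a b c d"
    by (cases g)
  obtain p r where v: "v = (p, r)"
    by fastforce
  show ?thesis
  proof (cases "r = 0")
    case False
    then have "of_int c * (of_int p / of_int r) + of_int d = (of_int (c * p + d * r) / of_int r :: rat)"
      "of_int a * (of_int p / of_int r) + of_int b = (of_int (a * p + b * r) / of_int r :: rat)"
      by (simp_all add: field_simps)
    with False show ?thesis
      unfolding g v by (simp del: of_int_add of_int_mult)
  qed (use assms g v in simp)
qed

lemma mv_eq_0_iff: "det g \<noteq> 0 \<Longrightarrow> mv g v = (0, 0) \<longleftrightarrow> v = (0, 0)"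
proof -
  obtain a b c d where g: "g = M a b c d"
    by (cases g)
  obtain p r where v: "v = (p, r)"
    by fastforce
  have "det g * p = d * (a * p + b * r) - b * (c * p + d * r)"
       "det g * r = a * (c * p + d * r) - c * (a * p + b * r)"
    by (simp_all add: g algebra_simps)
  then show "det g \<noteq> 0 \<Longrightarrow> ?thesis"
    by (auto simp: g v)
qed

lemma act_in_cusps: "x \<in> cusps \<Longrightarrow> act g x \<in> cusps"
  using cusps_eq_cusp_of act_cusp_of cusp_of_in_cusps by metis

lemma act_mmult:
  assumes "det B \<noteq> 0" and "x \<in> cusps"
  shows "act (mmult A B) x = act A (act B x)"
proof -
  obtain v where v: "v \<noteq> (0, 0)" "x = cusp_of v"
    using cusps_eq_cusp_of[OF assms(2)] by blast
  moreover have "mv B v \<noteq> (0, 0)"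
    using assms(1) v(1) mv_eq_0_iff by blast
  ultimately show ?thesis
    by (simp add: act_cusp_of mv_mmult)
qed

lemma act_mI [simp]: "act mI x = x"
  by (cases x) (auto simp: mI_def)

lemma act_minv:
  assumes "det g = 1" and "x \<in> cusps" and "act g x = x"
  shows "act (minv g) x = x"
  using act_mmult[of g x "minv g"] assms by (simp add: minv_mmult_cancel)

lemma gen_in_Delta: "gen l \<in> Delta"
  unfolding Delta_def by (metis eval_mat.simps mmult_mI_right rangeI)

text \<open>Euclid's algorithm with steps \<open>a\<^sup>\<plusminus>\<^sup>1, b\<^sup>\<plusminus>\<^sup>1\<close>: unless \<open>p/r \<in> {\<infinity>, 0, \<plusminus>1}\<close>, one of them
  strictly decreases \<open>\<bar>p\<bar> + \<bar>r\<bar>\<close>; and \<open>-1 = a\<^sup>-\<^sup>1 \<cdot> 1\<close>.\<close>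

lemma vector_orbit:
  "v \<noteq> (0, 0) \<Longrightarrow>
     \<exists>h \<in> Delta. \<exists>t. t \<noteq> (0, 0) \<and> cusp_of t \<in> {InfC, Cusp 0, Cusp 1} \<and> v = mv h t"
proof (induction "nat (\<bar>fst v\<bar> + \<bar>snd v\<bar>)" arbitrary: v rule: less_induct)
  case less
  obtain p r where v: "v = (p, r)"
    by fastforce
  have step: "\<exists>h \<in> Delta. \<exists>t. t \<noteq> (0, 0) \<and> cusp_of t \<in> {InfC, Cusp 0, Cusp 1} \<and> v = mv h t"
    if v': "v = mv (gen l) v'" "v' \<noteq> (0, 0)" "\<bar>fst v'\<bar> + \<bar>snd v'\<bar> < \<bar>p\<bar> + \<bar>r\<bar>" for l v'
  proof -
    have "nat (\<bar>fst v'\<bar> + \<bar>snd v'\<bar>) < nat (\<bar>fst v\<bar> + \<bar>snd v\<bar>)"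
      using v'(3) v by simp
    then obtain h t where "h \<in> Delta" "t \<noteq> (0, 0)" "cusp_of t \<in> {InfC, Cusp 0, Cusp 1}" "v' = mv h t"
      using less.hyps v'(2) by blast
    with v'(1) show ?thesis
      by (intro bexI[of _ "mmult (gen l) h"] exI[of _ t])
         (auto simp: mv_mmult mmult_in_Delta gen_in_Delta)
  qed
  consider "r = 0 \<or> p = 0 \<or> p = r" | "p = - r" "r \<noteq> 0"
    | "\<bar>p\<bar> > \<bar>r\<bar>" "r \<noteq> 0" "p \<noteq> - r" | "\<bar>r\<bar> > \<bar>p\<bar>" "p \<noteq> 0" "p \<noteq> r" "p \<noteq> - r"
    by linarith
  then show ?case
  proof cases
    case 1
    with less.prems show ?thesis
      by (intro bexI[of _ mI] exI[of _ v]) (auto simp: v mI_in_Delta)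
  next
    case 2
    with gen_in_Delta[of "(True, False)"] show ?thesis
      by (intro bexI[of _ "gen (True, False)"] exI[of _ "(- p, - p)"]) (auto simp: v)
  next
    case 3
    then show ?thesis
      by (cases "(p > 0) = (r > 0)")
         (rule step[of "(True, True)" "(p - 2 * r, r)"] step[of "(True, False)" "(p + 2 * r, r)"];
          use v in auto)+
  next
    case 4
    then show ?thesis
      by (cases "(p > 0) = (r > 0)")
         (rule step[of "(False, True)" "(p, r - 2 * p)"] step[of "(False, False)" "(p, r + 2 * p)"];
          use v in auto)+
  qed
qed

lemma cusp_orbit:
  assumes "x \<in> cusps"
  obtains h x0 where "h \<in> Delta" "x0 \<in> {InfC, Cusp 0, Cusp 1}" "x = act h x0"
proof -
  obtain v where v: "v \<noteq> (0, 0)" "x = cusp_of v"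
    using cusps_eq_cusp_of[OF assms] by blast
  then obtain h t where "h \<in> Delta" "t \<noteq> (0, 0)" "cusp_of t \<in> {InfC, Cusp 0, Cusp 1}" "v = mv h t"
    using vector_orbit by blast
  with v that show ?thesis
    by (metis act_cusp_of)
qed

section \<open>Stabilisers\<close>

definition wpow :: "letter list \<Rightarrow> int \<Rightarrow> letter list" where
  "wpow w m = (if 0 \<le> m then concat (replicate (nat m) w) else winv (concat (replicate (nat (- m)) w)))"

definition hpow :: "int \<times> int \<times> int \<Rightarrow> int \<Rightarrow> int \<times> int \<times> int" where
  "hpow u m = (case u of (x, y, z) \<Rightarrow> (m * x, m * y, m * z + x * y * (m * (m - 1) div 2)))"

lemma eval_H_replicate: "eval_H (concat (replicate k w)) = hpow (eval_H w) (int k)"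
proof (induction k)
  case (Suc k)
  obtain x y z where u: "eval_H w = (x, y, z)"
    by (cases "eval_H w")
  have "even (int k * (int k - 1))"
    by simp
  then obtain t where t: "int k * (int k - 1) = 2 * t"
    by (rule evenE)
  then have "(int k + 1) * (int k + 1 - 1) = 2 * (t + int k)"
    by (simp add: algebra_simps)
  then have "hpow (x, y, z) (int k + 1) = ((int k + 1) * x, (int k + 1) * y, (int k + 1) * z + x * y * (t + int k))"
    unfolding hpow_def prod.case by simp
  moreover have "hpow (x, y, z) (int k) = (int k * x, int k * y, int k * z + x * y * t)"
    unfolding hpow_def prod.case t by simp
  ultimately show ?case
    using Suc u by (simp add: eval_H_append algebra_simps)
qed (simp add: hpow_def)

lemma hinv_hpow: "hinv (hpow u m) = hpow u (- m)"
proof -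
  have "even (m * (m - 1))"
    by simp
  then obtain t where t: "m * (m - 1) = 2 * t"
    by (rule evenE)
  have "- m * (- m - 1) = 2 * (t + m)"
    using t by (simp add: algebra_simps)
  then show ?thesis
    using t by (cases u) (simp add: hpow_def algebra_simps)
qed

lemma eval_H_wpow: "eval_H (wpow w m) = hpow (eval_H w) m"
  by (simp add: wpow_def eval_H_replicate eval_H_winv hinv_hpow)

lemma eval_mat_wpow:
  assumes "\<And>k. eval_mat (concat (replicate k w)) = P (int k)" and "\<And>k. minv (P k) = P (- k)"
  shows "eval_mat (wpow w m) = P m"
  using assms by (simp add: wpow_def eval_mat_winv)

lemma eval_mat_replicate_a: "eval_mat (replicate k (True, True)) = M 1 (2 * int k) 0 1"
  by (induction k) (simp_all add: mI_def)

lemma eval_mat_replicate_b: "eval_mat (replicate k (False, True)) = M 1 0 (2 * int k) 1"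
  by (induction k) (simp_all add: mI_def)

text \<open>Powers of \<open>c = b a\<^sup>-\<^sup>1\<close>, the generator of the stabiliser of the cusp \<open>1\<close>; it has trace \<open>-2\<close>,
  whence the sign.\<close>

definition cpow :: "int \<Rightarrow> m2" where
  "cpow m = (let s = if even m then 1 else -1 in
     M (s * (1 - 2 * m)) (s * (2 * m)) (s * (- 2 * m)) (s * (1 + 2 * m)))"

lemma cpow_succ: "mmult (M 1 (-2) 2 (-3)) (cpow m) = cpow (m + 1)"
  by (cases "even m") (simp_all add: cpow_def algebra_simps)

lemma eval_mat_replicate_c:
  "eval_mat (concat (replicate k [(False, True), (True, False)])) = cpow (int k)"
proof (induction k)
  case (Suc k)
  then show ?case
    using cpow_succ[of "int k"] by (simp add: mmult_assoc[symmetric] add.commute)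
qed (simp add: mI_def cpow_def)

lemma heis_stab_InfC:
  assumes "g \<in> Delta" and "act g InfC = InfC"
  shows "\<exists>m. heis g = (m, 0, 0)"
proof -
  obtain a b c d where g: "g = M a b c d"
    by (cases g)
  have "c = 0"
    using assms(2) g by (simp split: if_splits)
  moreover have "a mod 4 = 1" "even b" "a * d = 1"
    using Delta_cong_if_in_Delta[OF assms(1)] g \<open>c = 0\<close> by simp_all
  ultimately have "a = 1" "d = 1" "b = 2 * (b div 2)"
    by (auto simp: zmult_eq_1_iff)
  with \<open>c = 0\<close> have "g = eval_mat (wpow [(True, True)] (b div 2))"
    by (subst eval_mat_wpow[of _ "\<lambda>m. M 1 (2 * m) 0 1"]) (simp_all add: g eval_mat_replicate_a)
  then show ?thesis
    by (simp add: eval_H_wpow hpow_def)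
qed

lemma heis_stab_zero:
  assumes "g \<in> Delta" and "act g (Cusp 0) = Cusp 0"
  shows "\<exists>m. heis g = (0, m, 0)"
proof -
  obtain a b c d where g: "g = M a b c d"
    by (cases g)
  have "d \<noteq> 0" "of_int b / of_int d = (0 :: rat)"
    using assms(2) g by (auto split: if_splits)
  then have "b = 0"
    by simp
  moreover have "a mod 4 = 1" "even c" "a * d = 1"
    using Delta_cong_if_in_Delta[OF assms(1)] g \<open>b = 0\<close> by simp_all
  ultimately have "a = 1" "d = 1" "c = 2 * (c div 2)"
    by (auto simp: zmult_eq_1_iff)
  with \<open>b = 0\<close> have "g = eval_mat (wpow [(False, True)] (c div 2))"
    by (subst eval_mat_wpow[of _ "\<lambda>m. M 1 0 (2 * m) 1"]) (simp_all add: g eval_mat_replicate_b)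
  then show ?thesis
    by (simp add: eval_H_wpow hpow_def)
qed

lemma stab_one_eq_cpow:
  assumes "g \<in> Delta" and "act g (Cusp 1) = Cusp 1"
  obtains m where "g = cpow m"
proof -
  obtain a b c d where g: "g = M a b c d"
    by (cases g)
  have "of_int c + of_int d \<noteq> (0 :: rat)" "(of_int a + of_int b) / (of_int c + of_int d) = (1 :: rat)"
    using assms(2) g by (auto split: if_splits)
  then have "of_int (a + b) = (of_int (c + d) :: rat)"
    by (simp add: field_simps)
  then have b: "b = c + d - a"
    by linarith
  have "a mod 4 = 1" "a * d - b * c = 1"
    using Delta_cong_if_in_Delta[OF assms(1)] g by simp_all
  moreover have "a * d - b * c = (c + d) * (a - c)"
    unfolding b by (simp add: algebra_simps)
  ultimately have "c + d = 1 \<and> a - c = 1 \<or> c + d = -1 \<and> a - c = -1"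
    by (simp add: zmult_eq_1_iff)
  then show ?thesis
  proof
    assume "c + d = 1 \<and> a - c = 1"
    moreover have "2 * ((1 - a) div 2) = 1 - a" "even ((1 - a) div 2)"
      using \<open>a mod 4 = 1\<close> by presburger+
    ultimately show ?thesis
      using that[of "(1 - a) div 2"] by (simp add: g b cpow_def algebra_simps)
  next
    assume "c + d = -1 \<and> a - c = -1"
    moreover have "2 * ((1 + a) div 2) = 1 + a" "odd ((1 + a) div 2)"
      using \<open>a mod 4 = 1\<close> by presburger+
    ultimately show ?thesis
      using that[of "(1 + a) div 2"] by (simp add: g b cpow_def algebra_simps)
  qed
qed

lemma heis_stab_one:
  assumes "g \<in> Delta" and "act g (Cusp 1) = Cusp 1"
  shows "\<exists>m. heis g = (- m, m, - (m * (m - 1) div 2))"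
proof -
  obtain m where "g = cpow m"
    using assms by (rule stab_one_eq_cpow)
  moreover have "minv (cpow k) = cpow (- k)" for k
    by (simp add: cpow_def)
  ultimately have "g = eval_mat (wpow [(False, True), (True, False)] m)"
    by (simp add: eval_mat_wpow eval_mat_replicate_c)
  then show ?thesis
    by (simp add: eval_H_wpow hpow_def)
qed

lemma fixed_point_coefficients:
  fixes A B C D :: real
  assumes "Im z > 0" and "of_real A * z + of_real B = z * (of_real C * z + of_real D)"
  shows "A = 2 * C * Re z + D" and "B = - C * (Re z)\<^sup>2 - C * (Im z)\<^sup>2"
proof -
  have re: "A * Re z + B = C * ((Re z)\<^sup>2 - (Im z)\<^sup>2) + D * Re z"
    and im: "A * Im z = (2 * C * Re z + D) * Im z"
    using arg_cong[OF assms(2), of Re] arg_cong[OF assms(2), of Im]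
    by (simp_all add: power2_eq_square algebra_simps)
  from im assms(1) show ad: "A = 2 * C * Re z + D"
    by simp
  with re show "B = - C * (Re z)\<^sup>2 - C * (Im z)\<^sup>2"
    by algebra
qed

lemma act_Pt_fixed_eq:
  assumes "Im z > 0" and "det (M a b c d) \<noteq> 0" and "act (M a b c d) (Pt z) = Pt z"
  shows "of_real (of_int a) * z + of_real (of_int b) = z * (of_real (of_int c) * z + of_real (of_int d))"
proof -
  have "of_int c * z + of_int d \<noteq> 0"
  proof
    assume z0: "of_int c * z + of_int d = 0"
    then have "Im (of_int c * z + of_int d) = 0"
      by simp
    with assms(1) have "c = 0"
      by simp
    with z0 assms(2) show False
      by simp
  qed
  with assms(3) show ?thesis
    by (simp add: field_simps)
qed

text \<open>An elliptic element would have \<open>\<bar>a + d\<bar> < 2\<close>, impossible since \<open>a + d \<equiv> 2 (mod 4)\<close> on \<open>\<Delta>\<close>.\<close>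

lemma stab_Delta_Pt:
  assumes "Im z > 0"
  shows "stab Delta (Pt z) = {mI}"
proof -
  have "g = mI" if "g \<in> Delta" "act g (Pt z) = Pt z" for g
  proof -
    obtain a b c d where g: "g = M a b c d"
      by (cases g)
    have h: "a mod 4 = 1" "d mod 4 = 1" "a * d - b * c = 1"
      using Delta_cong_if_in_Delta[OF that(1)] g by auto
    from assms that(2) h(3) g have "of_real (of_int a) * z + of_real (of_int b) =
        z * (of_real (of_int c) * z + of_real (of_int d))"
      by (intro act_Pt_fixed_eq) simp_all
    from fixed_point_coefficients[OF assms this]
    have ad: "real_of_int a = 2 * real_of_int c * Re z + real_of_int d"
      and bc: "real_of_int b = - real_of_int c * (Re z)\<^sup>2 - real_of_int c * (Im z)\<^sup>2"
      by simp_all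
    then have "(real_of_int a + real_of_int d)\<^sup>2 =
        4 * (real_of_int a * real_of_int d - real_of_int b * real_of_int c)
        - 4 * (real_of_int c)\<^sup>2 * (Im z)\<^sup>2"
      by algebra
    also have "real_of_int a * real_of_int d - real_of_int b * real_of_int c = 1"
      using h(3) by (simp flip: of_int_mult of_int_diff)
    finally have trace: "(real_of_int a + real_of_int d)\<^sup>2 = 4 - 4 * (real_of_int c)\<^sup>2 * (Im z)\<^sup>2"
      by simp
    have "c = 0"
    proof (rule ccontr)
      assume "c \<noteq> 0"
      with assms have "(real_of_int a + d)\<^sup>2 < 2\<^sup>2"
        unfolding trace by simp
      then have "\<bar>a + d\<bar> < 2"
        using abs_le_square_iff[of 2 "real_of_int a + d"] by linarith
      with h(1,2) show False
        by presburger
    qed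
    with ad bc h(3) have "a = d" "b = 0" "a * a = 1"
      by simp_all
    with h(1) \<open>c = 0\<close> show ?thesis
      by (auto simp: g mI_def zmult_eq_1_iff)
  qed
  then show ?thesis
    by (auto simp: stab_def mI_in_Delta)
qed

lemma Delta_subgroup_stab:
  assumes "Delta_subgroup G" and "x \<in> Hstar"
  shows "Delta_subgroup (stab G x)"
proof (cases "x \<in> cusps")
  case True
  with assms(1) show ?thesis
    unfolding Delta_subgroup_def stab_def
    by (auto simp: act_mmult act_minv det_Delta)
next
  case False
  with assms(2) obtain z where "x = Pt z" "Im z > 0"
    by (auto simp: Hstar_def cusps_def)
  then have "stab G x \<subseteq> {mI}"
    using assms(1) stab_Delta_Pt by (auto simp: Delta_subgroup_def stab_def)
  with assms(1) show ?thesis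
    by (auto simp: Delta_subgroup_def stab_def)
qed

lemma heis_stab_conj:
  assumes "h \<in> Delta" and "x0 \<in> cusps" and "g \<in> stab Delta (act h x0)"
  obtains g0 where "g0 \<in> stab Delta x0" "heis g = hmult (hmult (heis h) (heis g0)) (hinv (heis h))"
proof
  let ?g0 = "mmult (minv h) (mmult g h)"
  have g: "g \<in> Delta" "act g (act h x0) = act h x0"
    using assms(3) by (auto simp: stab_def)
  then have "act ?g0 x0 = act (mmult (minv h) h) x0"
    using assms(1,2) by (simp add: act_mmult act_in_cusps det_Delta det_mmult)
  then show "?g0 \<in> stab Delta x0"
    using assms(1) g by (simp add: stab_def minv_mmult_cancel det_Delta mmult_in_Delta minv_in_Delta)
  have "g = mmult (mmult h ?g0) (minv h)"
    using assms(1) by (simp add: mmult_assoc mmult_minv det_Delta flip: mmult_assoc[of h "minv h"])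
  then show "heis g = hmult (hmult (heis h) (heis ?g0)) (hinv (heis h))"
    using assms(1) g by (metis heis_mmult heis_minv mmult_in_Delta minv_in_Delta)
qed

section \<open>Ramification\<close>

lemma stab_ker_psi_subset_ker_phi:
  assumes "h \<in> Delta" and "x0 \<in> {InfC, Cusp 0}"
  shows "stab (ker_psi n) (act h x0) \<subseteq> ker_phi n"
proof
  fix g assume g: "g \<in> stab (ker_psi n) (act h x0)"
  then have "g \<in> stab Delta (act h x0)"
    by (auto simp: stab_def ker_psi_eq)
  moreover have "x0 \<in> cusps"
    using assms(2) by (auto simp: cusps_def)
  ultimately obtain g0 where g0: "g0 \<in> stab Delta x0"
    and conj: "heis g = hmult (hmult (heis h) (heis g0)) (hinv (heis h))"
    using heis_stab_conj assms(1) by blast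
  have "\<exists>X Y. heis g0 = (X, Y, 0)"
  proof (cases "x0 = InfC")
    case True
    with g0 obtain m where "heis g0 = (m, 0, 0)"
      using heis_stab_InfC by (auto simp: stab_def)
    then show ?thesis
      by blast
  next
    case False
    with assms(2) g0 obtain m where "heis g0 = (0, m, 0)"
      using heis_stab_zero by (auto simp: stab_def)
    then show ?thesis
      by blast
  qed
  then obtain X Y where XY: "heis g0 = (X, Y, 0)"
    by blast
  obtain hx hy hz where "heis h = (hx, hy, hz)"
    by (cases "heis h")
  with conj XY have "heis g = (X, Y, hx * Y - X * hy)"
    by (simp add: algebra_simps)
  with g show "g \<in> ker_phi n"
    by (auto simp: stab_def ker_psi_eq ker_phi_eq)
qed

lemma triangular_dvd_if_even_quotient:
  assumes "int n dvd m" and "even (m div int n)"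
  shows "int n dvd m * (m - 1) div 2"
proof (cases "n = 0")
  case False
  obtain k where m: "m = int n * k"
    using assms(1) by (rule dvdE)
  with False assms(2) obtain t where "k = 2 * t"
    by (auto elim: evenE)
  with m have "m * (m - 1) div 2 = int n * (t * (m - 1))"
    by (simp add: algebra_simps)
  then show ?thesis
    by simp
qed (use assms in simp)

lemma ker_phi_if_even_quotient:
  assumes "h \<in> Delta" and "g \<in> stab (ker_psi n) (act h (Cusp 1))"
    and "even (fst (snd (heis g)) div int n)"
  shows "g \<in> ker_phi n"
proof -
  have "g \<in> stab Delta (act h (Cusp 1))"
    using assms(2) by (auto simp: stab_def ker_psi_eq)
  moreover have "Cusp 1 \<in> cusps"
    by (simp add: cusps_def)
  ultimately obtain g0 where g0: "g0 \<in> stab Delta (Cusp 1)"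
    and conj: "heis g = hmult (hmult (heis h) (heis g0)) (hinv (heis h))"
    using heis_stab_conj assms(1) by blast
  obtain m where m: "heis g0 = (- m, m, - (m * (m - 1) div 2))"
    using g0 heis_stab_one by (auto simp: stab_def)
  obtain hx hy hz where "heis h = (hx, hy, hz)"
    by (cases "heis h")
  with conj m have g: "heis g = (- m, m, - (m * (m - 1) div 2) + hx * m + m * hy)"
    by (simp add: algebra_simps)
  with assms(2) have "int n dvd m"
    by (simp add: stab_def ker_psi_eq)
  with assms(3) g have "int n dvd m * (m - 1) div 2"
    by (simp add: triangular_dvd_if_even_quotient)
  with \<open>int n dvd m\<close> g assms(2) show ?thesis
    by (simp add: stab_def ker_psi_eq ker_phi_eq)
qed

lemma card_image_le_if_factors:
  assumes "finite (f ` A)" and "\<And>a b. a \<in> A \<Longrightarrow> b \<in> A \<Longrightarrow> f a = f b \<Longrightarrow> F a = F b"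
  shows "finite (F ` A) \<and> card (F ` A) \<le> card (f ` A)"
proof -
  have "F ` A = (\<lambda>a. F (inv_into A f (f a))) ` A"
  proof (rule image_cong)
    fix a assume "a \<in> A"
    then show "F a = F (inv_into A f (f a))"
      by (intro assms(2)) (simp_all add: inv_into_into f_inv_into_f)
  qed simp
  then have "F ` A = (\<lambda>y. F (inv_into A f y)) ` f ` A"
    by (simp add: image_image)
  with assms(1) show ?thesis
    by (simp add: card_image_le)
qed

lemma left_coset_eq:
  assumes "Delta_subgroup S" and "g \<in> Delta" and "mmult (minv g) g' \<in> S"
  shows "mmult g' ` S = mmult g ` S"
proof -
  define s where "s = mmult (minv g) g'"
  have s: "s \<in> S" "s \<in> Delta"
    using assms unfolding s_def Delta_subgroup_def by auto
  have "mmult s ` S = S"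
  proof
    show "mmult s ` S \<subseteq> S"
      using assms(1) s by (auto simp: Delta_subgroup_def)
    show "S \<subseteq> mmult s ` S"
    proof
      fix t assume "t \<in> S"
      then have "mmult (minv s) t \<in> S"
        using assms(1) s by (simp add: Delta_subgroup_def)
      moreover have "t = mmult s (mmult (minv s) t)"
        using s(2) by (simp add: mmult_assoc[symmetric] mmult_minv det_Delta)
      ultimately show "t \<in> mmult s ` S"
        by (rule image_eqI[rotated])
    qed
  qed
  moreover have "g' = mmult g s"
    using assms(2) by (simp add: s_def mmult_assoc[symmetric] mmult_minv det_Delta)
  then have "mmult g' ` S = mmult g ` mmult s ` S"
    by (simp add: image_image mmult_assoc)
  ultimately show ?thesis
    by simp
qed

lemma ram_index_le_card_image:
  assumes "Delta_subgroup (stab G1 x)" and "stab G2 x \<subseteq> Delta" and "finite (f ` stab G2 x)"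
    and "\<And>g g'. g \<in> stab G2 x \<Longrightarrow> g' \<in> stab G2 x \<Longrightarrow> f g = f g' \<Longrightarrow>
      mmult (minv g) g' \<in> stab G1 x"
  shows "finite (ram_cosets G1 G2 x) \<and> ram_index G1 G2 x \<le> card (f ` stab G2 x)"
proof -
  have "ram_cosets G1 G2 x = (\<lambda>g. mmult g ` stab G1 x) ` stab G2 x"
    by (auto simp: ram_cosets_def)
  moreover have "finite ((\<lambda>g. mmult g ` stab G1 x) ` stab G2 x) \<and>
      card ((\<lambda>g. mmult g ` stab G1 x) ` stab G2 x) \<le> card (f ` stab G2 x)"
  proof (rule card_image_le_if_factors[OF assms(3)])
    fix g g' assume g: "g \<in> stab G2 x" "g' \<in> stab G2 x" "f g = f g'"
    then have "g \<in> Delta"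
      using assms(2) by blast
    from left_coset_eq[OF assms(1) this assms(4)[OF g]]
    show "mmult g ` stab G1 x = mmult g' ` stab G1 x"
      by (rule sym)
  qed
  ultimately show ?thesis
    by (simp add: ram_index_def)
qed

lemma ram_index_le_1_if_stab_subset:
  assumes "Delta_subgroup G1" and "Delta_subgroup G2" and "x \<in> Hstar" and "stab G2 x \<subseteq> G1"
  shows "finite (ram_cosets G1 G2 x) \<and> ram_index G1 G2 x \<le> 1"
proof -
  have S1: "Delta_subgroup (stab G1 x)" and S2: "Delta_subgroup (stab G2 x)"
    using assms(1-3) Delta_subgroup_stab by blast+
  have "mmult (minv g) g' \<in> stab G1 x" if "g \<in> stab G2 x" "g' \<in> stab G2 x" for g g'
    using S2 assms(4) that unfolding Delta_subgroup_def stab_def by blast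
  moreover have "stab G2 x \<subseteq> Delta"
    using S2 by (simp add: Delta_subgroup_def)
  ultimately have "finite (ram_cosets G1 G2 x) \<and> ram_index G1 G2 x \<le> card ((\<lambda>_. ()) ` stab G2 x)"
    using S1 by (intro ram_index_le_card_image) simp_all
  moreover have "card ((\<lambda>_. ()) ` stab G2 x) \<le> card {()}"
    by (rule card_mono) auto
  ultimately show ?thesis
    by auto
qed

lemma stab_ker_phi_if_same_parity:
  assumes "h \<in> Delta"
    and g: "g \<in> stab (ker_psi n) (act h (Cusp 1))" "g' \<in> stab (ker_psi n) (act h (Cusp 1))"
    and par: "fst (snd (heis g)) div int n mod 2 = fst (snd (heis g')) div int n mod 2"
  shows "mmult (minv g) g' \<in> stab (ker_phi n) (act h (Cusp 1))"
proof -
  let ?x = "act h (Cusp 1)" and ?s = "mmult (minv g) g'"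
  have "?x \<in> Hstar"
    using act_in_cusps[of "Cusp 1" h] by (auto simp: cusps_def Hstar_def)
  with Delta_subgroup_ker_psi have "Delta_subgroup (stab (ker_psi n) ?x)"
    by (rule Delta_subgroup_stab)
  with g have s: "?s \<in> stab (ker_psi n) ?x"
    unfolding Delta_subgroup_def by blast
  obtain x y z x' y' z' where hg: "heis g = (x, y, z)" and hg': "heis g' = (x', y', z')"
    by (cases "heis g"; cases "heis g'")
  have "g \<in> Delta" "g' \<in> Delta" "int n dvd y" "int n dvd y'"
    using g by (auto simp: stab_def ker_psi_eq hg hg')
  then have "fst (snd (heis ?s)) = y' - y"
    by (simp add: heis_mmult heis_minv minv_in_Delta hg hg')
  moreover have "even (y' div int n - y div int n)"
  proof -
    have parity: "even (b - a)" if "a mod 2 = b mod 2" for a b :: int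
      using that by presburger
    show ?thesis
      by (rule parity) (use par in \<open>simp add: hg hg'\<close>)
  qed
  ultimately have "even (fst (snd (heis ?s)) div int n)"
    using \<open>int n dvd y\<close> \<open>int n dvd y'\<close> by simp
  then show ?thesis
    using ker_phi_if_even_quotient[OF assms(1) s] s by (simp add: stab_def)
qed

lemma ram_index_orbit_one_le_2:
  assumes "h \<in> Delta"
  shows "finite (ram_cosets (ker_phi n) (ker_psi n) (act h (Cusp 1))) \<and>
    ram_index (ker_phi n) (ker_psi n) (act h (Cusp 1)) \<le> 2"
proof -
  let ?x = "act h (Cusp 1)" and ?par = "\<lambda>g. fst (snd (heis g)) div int n mod 2"
  have x: "?x \<in> Hstar"
    using act_in_cusps[of "Cusp 1" h] by (auto simp: cusps_def Hstar_def)
  have "Delta_subgroup (stab (ker_phi n) ?x)"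
    using Delta_subgroup_ker_phi x by (rule Delta_subgroup_stab)
  moreover have "stab (ker_psi n) ?x \<subseteq> Delta"
    by (auto simp: stab_def ker_psi_eq)
  moreover have parities: "?par ` stab (ker_psi n) ?x \<subseteq> {0, 1}"
  proof -
    have "k mod 2 \<in> {0, 1}" for k :: int
      by (cases "even k") (simp_all add: even_iff_mod_2_eq_zero odd_iff_mod_2_eq_one)
    then show ?thesis
      by blast
  qed
  moreover have "finite (?par ` stab (ker_psi n) ?x)"
    using parities by (rule finite_subset) simp
  ultimately have "finite (ram_cosets (ker_phi n) (ker_psi n) ?x) \<and>
    ram_index (ker_phi n) (ker_psi n) ?x \<le> card (?par ` stab (ker_psi n) ?x)"
    using stab_ker_phi_if_same_parity[OF assms] by (intro ram_index_le_card_image) simp_all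
  moreover have "card (?par ` stab (ker_psi n) ?x) \<le> card {0, 1 :: int}"
    using parities by (rule card_mono[rotated]) simp
  ultimately show ?thesis
    by simp
qed

lemma stab_ker_psi_Pt_subset_ker_phi:
  assumes "Im z > 0"
  shows "stab (ker_psi n) (Pt z) \<subseteq> ker_phi n"
proof -
  have "stab (ker_psi n) (Pt z) \<subseteq> stab Delta (Pt z)"
    by (auto simp: stab_def ker_psi_eq)
  also have "\<dots> = {mI}"
    using assms by (rule stab_Delta_Pt)
  finally show ?thesis
    using mI_in_ker_phi by blast
qed

theorem lemma5p2:
  fixes n :: nat
  assumes "n \<ge> 2" and "even n"
  shows "\<forall>x \<in> Hstar.
           finite (ram_cosets (ker_phi n) (ker_psi n) x)
         \<and> ram_index (ker_phi n) (ker_psi n) x \<le> 2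
         \<and> (ram_index (ker_phi n) (ker_psi n) x > 1 \<longrightarrow> x \<in> Fermat_Z0_cusps)"
proof
  fix x assume x: "x \<in> Hstar"
  have unbranched: "finite (ram_cosets (ker_phi n) (ker_psi n) x) \<and> ram_index (ker_phi n) (ker_psi n) x \<le> 1"
    if "stab (ker_psi n) x \<subseteq> ker_phi n"
    using Delta_subgroup_ker_phi Delta_subgroup_ker_psi x that by (rule ram_index_le_1_if_stab_subset)
  consider (interior) z where "x = Pt z" "Im z > 0" | (cusp) "x \<in> cusps"
    using x by (auto simp: Hstar_def cusps_def)
  then show "finite (ram_cosets (ker_phi n) (ker_psi n) x)
         \<and> ram_index (ker_phi n) (ker_psi n) x \<le> 2
         \<and> (ram_index (ker_phi n) (ker_psi n) x > 1 \<longrightarrow> x \<in> Fermat_Z0_cusps)"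
  proof cases
    case interior
    then show ?thesis
      using unbranched stab_ker_psi_Pt_subset_ker_phi by simp
  next
    case cusp
    then obtain h x0 where h: "h \<in> Delta" "x0 \<in> {InfC, Cusp 0, Cusp 1}" "x = act h x0"
      by (rule cusp_orbit)
    then show ?thesis
      using unbranched stab_ker_psi_subset_ker_phi[OF h(1)] ram_index_orbit_one_le_2[OF h(1)]
      by (auto simp: Fermat_Z0_cusps_def)
  qed
qed

end
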